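(* Let $(S,\rightarrow)$ be a PNTS, $\phi$ a {\L}ukasiewicz modal $\mu$-calculus formula and $\rho$ an interpretation of the variables and propositional letters. Then, for all $s\in S$, \[ [\![\mathbb{P}_{\rtimes q}\phi]\!]_\rho(s)= \begin{cases} 1 & \text{if } [\![\phi]\!]_\rho (s) \rtimes q \\ 0 & \text{otherwise.}\end{cases} \]
   Context: $\mathcal{D}(S)=\{d:S\to[0,1]\mid \sum_{s\in S}d(s)=1\}$ is the set of discrete probability distributions on $S$. A probabilistic nondeterministic transition system (PNTS) is a pair $(S,\rightarrow)$ with $S$ a set of states and $\rightarrow\ \subseteq S\times\mathcal{D}(S)$. Formulas of the {\L}ukasiewicz modal $\mu$-calculus are generated by $\phi ::= X \mid P \mid \overline{P} \mid q\,\phi \mid \phi\sqcup\phi \mid \phi\sqcap\phi \mid \phi\oplus\phi \mid \phi\odot\phi \mid \Diamond\phi \mid \Box\phi \mid \mu X.\phi \mid \nu X.\phi$, with $q$ rational in $[0,1]$, $X$ a variable, $P$ a propositional letter with complement $\overline{P}$; $\underline{1}$ denotes $\nu X.X$ and $\underline{q}$ denotes $q\,\underline{1}$. An interpretation is $\rho:(\mathrm{Var}\uplus\mathrm{Prop})\to(S\to[0,1])$ with $\rho(\overline{P})(x)=1-\rho(P)(x)$. Semantics $[\![\phi]\!]_\rho:S\to[0,1]$: $[\![X]\!]_\rho=\rho(X)$, $[\![P]\!]_\rho=\rho(P)$, $[\![\overline P]\!]_\rho=1-\rho(P)$, $[\![q\,\phi]\!]_\rho(x)=q\cdot[\![\phi]\!]_\rho(x)$,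 $\sqcup,\sqcap$ are pointwise max/min, $[\![\phi\oplus\psi]\!]_\rho(x)=\min\{1,[\![\phi]\!]_\rho(x)+[\![\psi]\!]_\rho(x)\}$, $[\![\phi\odot\psi]\!]_\rho(x)=\max\{0,[\![\phi]\!]_\rho(x)+[\![\psi]\!]_\rho(x)-1\}$, $[\![\Diamond\phi]\!]_\rho(x)=\sup_{x\rightarrow d}\sum_{y\in S}d(y)[\![\phi]\!]_\rho(y)$, $[\![\Box\phi]\!]_\rho(x)=\inf_{x\rightarrow d}\sum_{y\in S}d(y)[\![\phi]\!]_\rho(y)$ (the empty sup is $0$, the empty inf is $1$), and $\mu X.\phi$, $\nu X.\phi$ denote the least and greatest fixed points of $f\mapsto[\![\phi]\!]_{\rho[f/X]}$. Threshold modalities: $\mathbb{P}_{>0}\phi=\mu Y.(Y\oplus\phi)$, $\mathbb{P}_{=1}\phi=\nu Y.(Y\odot\phi)$, and for $r\in(0,1)$, $\mathbb{P}_{>r}\phi=\mathbb{P}_{>0}(\phi\odot\underline{1-r})$, $\mathbb{P}_{\geq r}\phi=\mathbb{P}_{=1}(\phi\oplus\underline{1-r})$, where $Y$ does not occur in $\phi$; $\mathbb{P}_{\rtimes q}$ denotes any of these four, with $\rtimes q$ the corresponding condition $>0$, $=1$, $>r$, $\geq r$. *)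

theory Defs
  imports "HOL-Probability.Probability"
begin

datatype ('v, 'p) lformula =
    LVar 'v
  | LProp 'p
  | LNProp 'p
  | LScale rat "('v, 'p) lformula"
  | LJoin "('v, 'p) lformula" "('v, 'p) lformula"
  | LMeet "('v, 'p) lformula" "('v, 'p) lformula"
  | LOplus "('v, 'p) lformula" "('v, 'p) lformula"
  | LOdot "('v, 'p) lformula" "('v, 'p) lformula"
  | LDia "('v, 'p) lformula"
  | LBox "('v, 'p) lformula"
  | LMu 'v "('v, 'p) lformula"
  | LNu 'v "('v, 'p) lformula"

primrec wf_lformula :: "('v, 'p) lformula \<Rightarrow> bool" where
  "wf_lformula (LVar X) = True"
| "wf_lformula (LProp P) = True"
| "wf_lformula (LNProp P) = True"
| "wf_lformula (LScale q f) = (0 \<le> q \<and> q \<le> 1 \<and> wf_lformula f)"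
| "wf_lformula (LJoin f g) = (wf_lformula f \<and> wf_lformula g)"
| "wf_lformula (LMeet f g) = (wf_lformula f \<and> wf_lformula g)"
| "wf_lformula (LOplus f g) = (wf_lformula f \<and> wf_lformula g)"
| "wf_lformula (LOdot f g) = (wf_lformula f \<and> wf_lformula g)"
| "wf_lformula (LDia f) = wf_lformula f"
| "wf_lformula (LBox f) = wf_lformula f"
| "wf_lformula (LMu X f) = wf_lformula f"
| "wf_lformula (LNu X f) = wf_lformula f"

primrec lvars :: "('v, 'p) lformula \<Rightarrow> 'v set" where
  "lvars (LVar X) = {X}"
| "lvars (LProp P) = {}"
| "lvars (LNProp P) = {}"
| "lvars (LScale q f) = lvars f"
| "lvars (LJoin f g) = lvars f \<union> lvars g"
| "lvars (LMeet f g) = lvars f \<union> lvars g"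
| "lvars (LOplus f g) = lvars f \<union> lvars g"
| "lvars (LOdot f g) = lvars f \<union> lvars g"
| "lvars (LDia f) = lvars f"
| "lvars (LBox f) = lvars f"
| "lvars (LMu X f) = insert X (lvars f)"
| "lvars (LNu X f) = insert X (lvars f)"

text \<open>Least / greatest fixed points of an operator on the complete lattice of
functions S \<rightarrow> [0,1] (Knaster-Tarski: meet of prefixed points / join of postfixed points).\<close>
definition unit_valued :: "('s \<Rightarrow> real) \<Rightarrow> bool" where
  "unit_valued f \<longleftrightarrow> (\<forall>x. 0 \<le> f x \<and> f x \<le> 1)"

definition lfp01 :: "(('s \<Rightarrow> real) \<Rightarrow> ('s \<Rightarrow> real)) \<Rightarrow> 's \<Rightarrow> real" where
  "lfp01 F = (\<lambda>x. Inf {f x | f. unit_valued f \<and> (\<forall>y. F f y \<le> f y)})"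

definition gfp01 :: "(('s \<Rightarrow> real) \<Rightarrow> ('s \<Rightarrow> real)) \<Rightarrow> 's \<Rightarrow> real" where
  "gfp01 F = (\<lambda>x. Sup {f x | f. unit_valued f \<and> (\<forall>y. f y \<le> F f y)})"

text \<open>A PNTS on state type 's is given by trans :: 's \<Rightarrow> 's pmf set (x \<rightarrow> d iff d \<in> trans x);
'a pmf is the type of discrete probability distributions.\<close>
definition expect :: "'s pmf \<Rightarrow> ('s \<Rightarrow> real) \<Rightarrow> real" where
  "expect d f = (\<Sum>\<^sub>\<infinity>y. pmf d y * f y)"

primrec lsem :: "('s \<Rightarrow> 's pmf set) \<Rightarrow> ('v \<Rightarrow> 's \<Rightarrow> real) \<Rightarrow> ('p \<Rightarrow> 's \<Rightarrow> real)
    \<Rightarrow> ('v, 'p) lformula \<Rightarrow> 's \<Rightarrow> real" where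
  "lsem T \<rho> \<pi> (LVar X) = \<rho> X"
| "lsem T \<rho> \<pi> (LProp P) = \<pi> P"
| "lsem T \<rho> \<pi> (LNProp P) = (\<lambda>x. 1 - \<pi> P x)"
| "lsem T \<rho> \<pi> (LScale q f) = (\<lambda>x. real_of_rat q * lsem T \<rho> \<pi> f x)"
| "lsem T \<rho> \<pi> (LJoin f g) = (\<lambda>x. max (lsem T \<rho> \<pi> f x) (lsem T \<rho> \<pi> g x))"
| "lsem T \<rho> \<pi> (LMeet f g) = (\<lambda>x. min (lsem T \<rho> \<pi> f x) (lsem T \<rho> \<pi> g x))"
| "lsem T \<rho> \<pi> (LOplus f g) = (\<lambda>x. min 1 (lsem T \<rho> \<pi> f x + lsem T \<rho> \<pi> g x))"
| "lsem T \<rho> \<pi> (LOdot f g) = (\<lambda>x. max 0 (lsem T \<rho> \<pi> f x + lsem T \<rho> \<pi> g x - 1))"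
| "lsem T \<rho> \<pi> (LDia f) = (\<lambda>x. if T x = {} then 0
        else (SUP d\<in>T x. expect d (lsem T \<rho> \<pi> f)))"
| "lsem T \<rho> \<pi> (LBox f) = (\<lambda>x. if T x = {} then 1
        else (INF d\<in>T x. expect d (lsem T \<rho> \<pi> f)))"
| "lsem T \<rho> \<pi> (LMu X f) = lfp01 (\<lambda>g. lsem T (\<rho>(X := g)) \<pi> f)"
| "lsem T \<rho> \<pi> (LNu X f) = gfp01 (\<lambda>g. lsem T (\<rho>(X := g)) \<pi> f)"

text \<open>Constants: underline 1 = nu X. X, underline q = q (underline 1).\<close>
definition lone :: "'v \<Rightarrow> ('v, 'p) lformula" where
  "lone X = LNu X (LVar X)"

definition lconst :: "'v \<Rightarrow> rat \<Rightarrow> ('v, 'p) lformula" where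
  "lconst X q = LScale q (lone X)"

text \<open>Threshold modalities (Y is the fixed-point variable, X the variable used for underline 1).\<close>
datatype threshold = TGt0 | TEq1 | TGt rat | TGe rat

fun valid_threshold :: "threshold \<Rightarrow> bool" where
  "valid_threshold (TGt r) = (0 < r \<and> r < 1)"
| "valid_threshold (TGe r) = (0 < r \<and> r < 1)"
| "valid_threshold _ = True"

definition Pgt0 :: "'v \<Rightarrow> ('v, 'p) lformula \<Rightarrow> ('v, 'p) lformula" where
  "Pgt0 Y f = LMu Y (LOplus (LVar Y) f)"

definition Peq1 :: "'v \<Rightarrow> ('v, 'p) lformula \<Rightarrow> ('v, 'p) lformula" where
  "Peq1 Y f = LNu Y (LOdot (LVar Y) f)"

fun Pthr :: "'v \<Rightarrow> 'v \<Rightarrow> threshold \<Rightarrow> ('v, 'p) lformula \<Rightarrow> ('v, 'p) lformula" where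
  "Pthr Y X TGt0 f = Pgt0 Y f"
| "Pthr Y X TEq1 f = Peq1 Y f"
| "Pthr Y X (TGt r) f = Pgt0 Y (LOdot f (lconst X (1 - r)))"
| "Pthr Y X (TGe r) f = Peq1 Y (LOplus f (lconst X (1 - r)))"

fun thr_holds :: "threshold \<Rightarrow> real \<Rightarrow> bool" where
  "thr_holds TGt0 v = (v > 0)"
| "thr_holds TEq1 v = (v = 1)"
| "thr_holds (TGt r) v = (v > real_of_rat r)"
| "thr_holds (TGe r) v = (v \<ge> real_of_rat r)"

end

theory Submission
  imports Defs
begin

text \<open>Both threshold modalities are fixed points of operators acting pointwise:
\<open>\<mu>Y. Y \<oplus> \<psi>\<close> is the least \<open>g\<close> with \<open>min 1 (g x + \<psi> x) \<le> g x\<close>, which forces \<open>g x = 1\<close>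
exactly where \<open>\<psi> x > 0\<close>, and dually \<open>\<nu>Y. Y \<odot> \<psi>\<close> is the greatest \<open>g\<close> with
\<open>g x \<le> max 0 (g x + \<psi> x - 1)\<close>, which allows \<open>g x > 0\<close> only where \<open>\<psi> x = 1\<close>. The
thresholds \<open>> r\<close> and \<open>\<ge> r\<close> reduce to these, since the constant \<open>\<nu>X. X\<close> denotes \<open>1\<close>
and shifting by \<open>1 - r\<close> with \<open>\<odot>\<close> resp. \<open>\<oplus>\<close> moves the threshold \<open>r\<close> to \<open>0\<close> resp. \<open>1\<close>.\<close>

lemma pmf_summable_on: "pmf d summable_on A"
  by (rule abs_summable_summable, subst abs_summable_equivalent, rule pmf_abs_summable)

lemma infsum_pmf_UNIV: "infsum (pmf d) UNIV = 1"
  using infsetsum_pmf_eq_1[of d UNIV] infsetsum_infsum[OF pmf_abs_summable[of d UNIV]] by simp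

lemma expect_unit_valued:
  assumes "unit_valued f"
  shows "0 \<le> expect d f \<and> expect d f \<le> 1"
proof -
  have f: "0 \<le> f y" "f y \<le> 1" for y
    using assms unfolding unit_valued_def by auto
  have "Infinite_Sum.abs_summable_on (pmf d) UNIV"
    by (subst abs_summable_equivalent, rule pmf_abs_summable)
  then have "Infinite_Sum.abs_summable_on (\<lambda>y. pmf d y * f y) UNIV"
    by (rule Infinite_Sum.abs_summable_on_comparison_test) (simp add: f abs_mult mult_left_le)
  then have summable: "(\<lambda>y. pmf d y * f y) summable_on UNIV"
    by (rule abs_summable_summable)
  have "expect d f \<le> infsum (pmf d) UNIV"
    unfolding expect_def
    by (rule infsum_mono[OF summable pmf_summable_on]) (simp add: f mult_left_le)
  moreover have "0 \<le> expect d f"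
    unfolding expect_def by (rule infsum_nonneg) (simp add: f)
  ultimately show ?thesis
    by (simp add: infsum_pmf_UNIV)
qed

lemma cSUP_in_interval:
  fixes g :: "'a \<Rightarrow> 'b::conditionally_complete_lattice"
  assumes "A \<noteq> {}" "\<And>d. d \<in> A \<Longrightarrow> a \<le> g d \<and> g d \<le> b"
  shows "a \<le> (SUP d\<in>A. g d) \<and> (SUP d\<in>A. g d) \<le> b"
proof
  obtain d0 where d0: "d0 \<in> A" using assms(1) by blast
  have "bdd_above (g ` A)" using assms(2) by (intro bdd_aboveI[of _ b]) auto
  then have "g d0 \<le> (SUP d\<in>A. g d)" by (rule cSUP_upper[OF d0])
  then show "a \<le> (SUP d\<in>A. g d)" using assms(2)[OF d0] order_trans by blast
  show "(SUP d\<in>A. g d) \<le> b" using assms by (intro cSUP_least) auto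
qed

lemma cINF_in_interval:
  fixes g :: "'a \<Rightarrow> 'b::conditionally_complete_lattice"
  assumes "A \<noteq> {}" "\<And>d. d \<in> A \<Longrightarrow> a \<le> g d \<and> g d \<le> b"
  shows "a \<le> (INF d\<in>A. g d) \<and> (INF d\<in>A. g d) \<le> b"
proof
  obtain d0 where d0: "d0 \<in> A" using assms(1) by blast
  have "bdd_below (g ` A)" using assms(2) by (intro bdd_belowI[of _ a]) auto
  then have "(INF d\<in>A. g d) \<le> g d0" by (rule cINF_lower[OF _ d0])
  then show "(INF d\<in>A. g d) \<le> b" using assms(2)[OF d0] order_trans by blast
  show "a \<le> (INF d\<in>A. g d)" using assms by (intro cINF_greatest) auto
qed

lemma lfp01_eqI:
  assumes "unit_valued h" "\<And>y. F h y \<le> h y"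
    and "\<And>f x. unit_valued f \<Longrightarrow> \<forall>y. F f y \<le> f y \<Longrightarrow> h x \<le> f x"
  shows "lfp01 F = h"
proof
  fix x
  let ?A = "{f x | f. unit_valued f \<and> (\<forall>y. F f y \<le> f y)}"
  have "h x \<in> ?A" using assms(1,2) by blast
  moreover have "bdd_below ?A" using assms(3) by (intro bdd_belowI[of _ "h x"]) blast
  ultimately have "Inf ?A \<le> h x" by (rule cInf_lower)
  moreover have "h x \<le> Inf ?A"
    using \<open>h x \<in> ?A\<close> assms(3) by (intro cInf_greatest) blast+
  ultimately show "lfp01 F x = h x" unfolding lfp01_def by simp
qed

lemma gfp01_eqI:
  assumes "unit_valued h" "\<And>y. h y \<le> F h y"
    and "\<And>f x. unit_valued f \<Longrightarrow> \<forall>y. f y \<le> F f y \<Longrightarrow> f x \<le> h x"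
  shows "gfp01 F = h"
proof
  fix x
  let ?A = "{f x | f. unit_valued f \<and> (\<forall>y. f y \<le> F f y)}"
  have "h x \<in> ?A" using assms(1,2) by blast
  moreover have "bdd_above ?A" using assms(3) by (intro bdd_aboveI[of _ "h x"]) blast
  ultimately have "h x \<le> Sup ?A" by (rule cSup_upper)
  moreover have "Sup ?A \<le> h x"
    using \<open>h x \<in> ?A\<close> assms(3) by (intro cSup_least) blast+
  ultimately show "gfp01 F x = h x" unfolding gfp01_def by simp
qed

lemma lfp01_unit_valued:
  assumes "\<And>g. unit_valued g \<Longrightarrow> unit_valued (F g)"
  shows "unit_valued (lfp01 F)"
  unfolding unit_valued_def
proof
  fix x
  let ?A = "{f x | f. unit_valued f \<and> (\<forall>y. F f y \<le> f y)}"
  have one: "unit_valued (\<lambda>_. 1::real)" by (simp add: unit_valued_def)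
  then have "1 \<in> ?A" using assms[OF one] unfolding unit_valued_def by force
  moreover have "bdd_below ?A" by (rule bdd_belowI[of _ 0]) (auto simp: unit_valued_def)
  ultimately have "Inf ?A \<le> 1" by (rule cInf_lower)
  moreover have "0 \<le> Inf ?A"
    using \<open>1 \<in> ?A\<close> by (intro cInf_greatest) (auto simp: unit_valued_def)
  ultimately show "0 \<le> lfp01 F x \<and> lfp01 F x \<le> 1" unfolding lfp01_def by simp
qed

lemma gfp01_unit_valued:
  assumes "\<And>g. unit_valued g \<Longrightarrow> unit_valued (F g)"
  shows "unit_valued (gfp01 F)"
  unfolding unit_valued_def
proof
  fix x
  let ?A = "{f x | f. unit_valued f \<and> (\<forall>y. f y \<le> F f y)}"
  have zero: "unit_valued (\<lambda>_. 0::real)" by (simp add: unit_valued_def)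
  then have "0 \<in> ?A" using assms[OF zero] unfolding unit_valued_def by force
  moreover have "bdd_above ?A" by (rule bdd_aboveI[of _ 1]) (auto simp: unit_valued_def)
  ultimately have "0 \<le> Sup ?A" by (rule cSup_upper)
  moreover have "Sup ?A \<le> 1"
    using \<open>0 \<in> ?A\<close> by (intro cSup_least) (auto simp: unit_valued_def)
  ultimately show "0 \<le> gfp01 F x \<and> gfp01 F x \<le> 1" unfolding gfp01_def by simp
qed

lemma unit_valued_comp:
  assumes "unit_valued f" "\<And>a. 0 \<le> a \<Longrightarrow> a \<le> 1 \<Longrightarrow> 0 \<le> h a \<and> h a \<le> 1"
  shows "unit_valued (\<lambda>x. h (f x))"
  using assms unfolding unit_valued_def by blast

lemma unit_valued_comp2:
  assumes "unit_valued f" "unit_valued g"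
    and "\<And>a b. 0 \<le> a \<Longrightarrow> a \<le> 1 \<Longrightarrow> 0 \<le> b \<Longrightarrow> b \<le> 1 \<Longrightarrow> 0 \<le> h a b \<and> h a b \<le> 1"
  shows "unit_valued (\<lambda>x. h (f x) (g x))"
  using assms unfolding unit_valued_def by blast

lemma lsem_unit_valued:
  assumes "wf_lformula \<phi>" "\<And>Z. unit_valued (\<rho> Z)" "\<And>P. unit_valued (\<pi> P)"
  shows "unit_valued (lsem T \<rho> \<pi> \<phi>)"
  using assms(1,2)
proof (induction \<phi> arbitrary: \<rho>)
  case (LNProp P)
  show ?case unfolding lsem.simps by (rule unit_valued_comp[OF assms(3)]) auto
next
  case (LScale q f)
  then have f: "unit_valued (lsem T \<rho> \<pi> f)" by simp
  have q: "0 \<le> real_of_rat q" "real_of_rat q \<le> 1"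
    using LScale.prems(1) by (auto simp: zero_le_of_rat_iff of_rat_le_1_iff)
  show ?case
    unfolding lsem.simps by (rule unit_valued_comp[OF f]) (use q in \<open>auto intro: mult_le_one\<close>)
next
  case (LDia f)
  then have "0 \<le> expect d (lsem T \<rho> \<pi> f) \<and> expect d (lsem T \<rho> \<pi> f) \<le> 1" for d
    by (simp add: expect_unit_valued)
  then show ?case
    unfolding unit_valued_def by (auto intro!: cSUP_in_interval)
next
  case (LBox f)
  then have "0 \<le> expect d (lsem T \<rho> \<pi> f) \<and> expect d (lsem T \<rho> \<pi> f) \<le> 1" for d
    by (simp add: expect_unit_valued)
  then show ?case
    unfolding unit_valued_def by (auto intro!: cINF_in_interval)
next
  case (LMu X f)
  show ?case
    unfolding lsem.simps by (rule lfp01_unit_valued, rule LMu.IH) (use LMu.prems in auto)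
next
  case (LNu X f)
  show ?case
    unfolding lsem.simps by (rule gfp01_unit_valued, rule LNu.IH) (use LNu.prems in auto)
next
  case (LJoin f g)
  then have "unit_valued (lsem T \<rho> \<pi> f)" "unit_valued (lsem T \<rho> \<pi> g)" by simp_all
  then show ?case unfolding lsem.simps by (rule unit_valued_comp2) auto
next
  case (LMeet f g)
  then have "unit_valued (lsem T \<rho> \<pi> f)" "unit_valued (lsem T \<rho> \<pi> g)" by simp_all
  then show ?case unfolding lsem.simps by (rule unit_valued_comp2) auto
next
  case (LOplus f g)
  then have "unit_valued (lsem T \<rho> \<pi> f)" "unit_valued (lsem T \<rho> \<pi> g)" by simp_all
  then show ?case unfolding lsem.simps by (rule unit_valued_comp2) auto
next
  case (LOdot f g)
  then have "unit_valued (lsem T \<rho> \<pi> f)" "unit_valued (lsem T \<rho> \<pi> g)" by simp_all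
  then show ?case unfolding lsem.simps by (rule unit_valued_comp2) auto
qed (simp_all add: assms(3))

lemma lsem_cong:
  assumes "\<And>Z. Z \<in> lvars \<phi> \<Longrightarrow> \<rho> Z = \<rho>' Z"
  shows "lsem T \<rho> \<pi> \<phi> = lsem T \<rho>' \<pi> \<phi>"
  using assms
proof (induction \<phi> arbitrary: \<rho> \<rho>')
  case (LMu X f)
  have "(\<lambda>g. lsem T (\<rho>(X := g)) \<pi> f) = (\<lambda>g. lsem T (\<rho>'(X := g)) \<pi> f)"
    by (rule ext, rule LMu.IH) (use LMu.prems in auto)
  then show ?case by (simp only: lsem.simps)
next
  case (LNu X f)
  have "(\<lambda>g. lsem T (\<rho>(X := g)) \<pi> f) = (\<lambda>g. lsem T (\<rho>'(X := g)) \<pi> f)"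
    by (rule ext, rule LNu.IH) (use LNu.prems in auto)
  then show ?case by (simp only: lsem.simps)
next
  case (LScale q f)
  have "lsem T \<rho> \<pi> f = lsem T \<rho>' \<pi> f" by (rule LScale.IH) (use LScale.prems in auto)
  then show ?case by (simp only: lsem.simps)
next
  case (LDia f)
  have "lsem T \<rho> \<pi> f = lsem T \<rho>' \<pi> f" by (rule LDia.IH) (use LDia.prems in auto)
  then show ?case by (simp only: lsem.simps)
next
  case (LBox f)
  have "lsem T \<rho> \<pi> f = lsem T \<rho>' \<pi> f" by (rule LBox.IH) (use LBox.prems in auto)
  then show ?case by (simp only: lsem.simps)
next
  case (LJoin f g)
  have "lsem T \<rho> \<pi> f = lsem T \<rho>' \<pi> f" "lsem T \<rho> \<pi> g = lsem T \<rho>' \<pi> g"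
    by (rule LJoin.IH; use LJoin.prems in auto)+
  then show ?case by (simp only: lsem.simps)
next
  case (LMeet f g)
  have "lsem T \<rho> \<pi> f = lsem T \<rho>' \<pi> f" "lsem T \<rho> \<pi> g = lsem T \<rho>' \<pi> g"
    by (rule LMeet.IH; use LMeet.prems in auto)+
  then show ?case by (simp only: lsem.simps)
next
  case (LOplus f g)
  have "lsem T \<rho> \<pi> f = lsem T \<rho>' \<pi> f" "lsem T \<rho> \<pi> g = lsem T \<rho>' \<pi> g"
    by (rule LOplus.IH; use LOplus.prems in auto)+
  then show ?case by (simp only: lsem.simps)
next
  case (LOdot f g)
  have "lsem T \<rho> \<pi> f = lsem T \<rho>' \<pi> f" "lsem T \<rho> \<pi> g = lsem T \<rho>' \<pi> g"
    by (rule LOdot.IH; use LOdot.prems in auto)+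
  then show ?case by (simp only: lsem.simps)
qed simp_all

lemma lfp01_oplus:
  fixes a :: "'s \<Rightarrow> real"
  assumes "\<And>x. 0 \<le> a x"
  shows "lfp01 (\<lambda>g x. min 1 (g x + a x)) = (\<lambda>x. if a x > 0 then 1 else 0)"
proof (rule lfp01_eqI)
  fix f :: "'s \<Rightarrow> real" and x
  assume "unit_valued f" and "\<forall>y. min 1 (f y + a y) \<le> f y"
  then have "0 \<le> f x" "f x \<le> 1" "min 1 (f x + a x) \<le> f x"
    unfolding unit_valued_def by auto
  then show "(if a x > 0 then 1 else 0) \<le> f x" by (auto simp: min_def split: if_splits)
qed (use assms in \<open>auto simp: unit_valued_def\<close>)

lemma gfp01_odot:
  fixes a :: "'s \<Rightarrow> real"
  assumes "\<And>x. a x \<le> 1"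
  shows "gfp01 (\<lambda>g x. max 0 (g x + a x - 1)) = (\<lambda>x. if a x = 1 then 1 else 0)"
proof (rule gfp01_eqI)
  fix f :: "'s \<Rightarrow> real" and x
  assume "unit_valued f" and "\<forall>y. f y \<le> max 0 (f y + a y - 1)"
  then have "0 \<le> f x" "f x \<le> 1" "f x \<le> max 0 (f x + a x - 1)"
    unfolding unit_valued_def by auto
  then show "f x \<le> (if a x = 1 then 1 else 0)"
    using assms[of x] by (auto simp: max_def split: if_splits)
qed (use assms in \<open>auto simp: unit_valued_def\<close>)

lemma gfp01_id: "gfp01 (\<lambda>g. g) = (\<lambda>_. 1)"
  by (rule gfp01_eqI) (auto simp: unit_valued_def)

lemma lsem_lconst: "lsem T \<rho> \<pi> (lconst X q) = (\<lambda>_. real_of_rat q)"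
  by (simp add: lconst_def lone_def gfp01_id)

lemma lsem_Pgt0:
  assumes "Y \<notin> lvars \<psi>" "\<And>x. 0 \<le> lsem T \<rho> \<pi> \<psi> x"
  shows "lsem T \<rho> \<pi> (Pgt0 Y \<psi>) s = (if lsem T \<rho> \<pi> \<psi> s > 0 then 1 else 0)"
proof -
  have "lsem T (\<rho>(Y := g)) \<pi> \<psi> = lsem T \<rho> \<pi> \<psi>" for g
    using assms(1) by (intro lsem_cong) auto
  then have "lsem T \<rho> \<pi> (Pgt0 Y \<psi>) = lfp01 (\<lambda>g x. min 1 (g x + lsem T \<rho> \<pi> \<psi> x))"
    by (simp add: Pgt0_def)
  then show ?thesis
    by (simp add: lfp01_oplus assms(2))
qed

lemma lsem_Peq1:
  assumes "Y \<notin> lvars \<psi>" "\<And>x. lsem T \<rho> \<pi> \<psi> x \<le> 1"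
  shows "lsem T \<rho> \<pi> (Peq1 Y \<psi>) s = (if lsem T \<rho> \<pi> \<psi> s = 1 then 1 else 0)"
proof -
  have "lsem T (\<rho>(Y := g)) \<pi> \<psi> = lsem T \<rho> \<pi> \<psi>" for g
    using assms(1) by (intro lsem_cong) auto
  then have "lsem T \<rho> \<pi> (Peq1 Y \<psi>) = gfp01 (\<lambda>g x. max 0 (g x + lsem T \<rho> \<pi> \<psi> x - 1))"
    by (simp add: Peq1_def)
  then show ?thesis
    by (simp add: gfp01_odot assms(2))
qed

theorem mainTheorem4:
  fixes T :: "'s \<Rightarrow> 's pmf set"
    and \<rho> :: "'v \<Rightarrow> 's \<Rightarrow> real"
    and \<pi> :: "'p \<Rightarrow> 's \<Rightarrow> real"
    and \<phi> :: "('v, 'p) lformula"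
    and t :: threshold
    and X Y :: 'v
    and s :: 's
  assumes "wf_lformula \<phi>"
    and "\<And>Z x. 0 \<le> \<rho> Z x \<and> \<rho> Z x \<le> 1"
    and "\<And>P x. 0 \<le> \<pi> P x \<and> \<pi> P x \<le> 1"
    and "valid_threshold t"
    and "Y \<notin> lvars \<phi>"
    and "X \<noteq> Y"
  shows "lsem T \<rho> \<pi> (Pthr Y X t \<phi>) s = (if thr_holds t (lsem T \<rho> \<pi> \<phi> s) then 1 else 0)"
proof -
  have "unit_valued (lsem T \<rho> \<pi> \<phi>)"
    using assms(1-3) by (intro lsem_unit_valued) (auto simp: unit_valued_def)
  then have \<phi>_ge_0: "0 \<le> lsem T \<rho> \<pi> \<phi> x" and \<phi>_le_1: "lsem T \<rho> \<pi> \<phi> x \<le> 1" for x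
    by (auto simp: unit_valued_def)
  have Y_fresh: "Y \<notin> lvars (lconst X q :: ('v, 'p) lformula)" for q
    using assms(6) by (simp add: lconst_def lone_def)
  show ?thesis
  proof (cases t)
    case TGt0
    then show ?thesis using lsem_Pgt0[OF assms(5) \<phi>_ge_0] by simp
  next
    case TEq1
    then show ?thesis using lsem_Peq1[OF assms(5) \<phi>_le_1] by simp
  next
    case (TGt r)
    have "lsem T \<rho> \<pi> (Pgt0 Y (LOdot \<phi> (lconst X (1 - r)))) s
        = (if lsem T \<rho> \<pi> \<phi> s - real_of_rat r > 0 then 1 else 0)"
      using assms(5) Y_fresh by (subst lsem_Pgt0) (auto simp: lsem_lconst of_rat_diff)
    with TGt show ?thesis by simp
  next
    case (TGe r)
    have "lsem T \<rho> \<pi> (Peq1 Y (LOplus \<phi> (lconst X (1 - r)))) s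
        = (if min 1 (lsem T \<rho> \<pi> \<phi> s + (1 - real_of_rat r)) = 1 then 1 else 0)"
      using assms(5) Y_fresh by (subst lsem_Peq1) (auto simp: lsem_lconst of_rat_diff)
    with TGe show ?thesis by (auto simp: min_def)
  qed
qed

end
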